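(* Let $G$ be an infinite discrete group, $B$ a unital C$^*$-algebra with action $\alpha:G\to\mathrm{Aut}(B)$, $A_1=B\rtimes_{\alpha,r}G$ with implementing unitaries $u_g$ ($g\in G$), $\phi_1$ a faithful $\alpha$-invariant state on $B$ extended to $A_1$ by vanishing on $Bu_g$ for $g\ne e$, $A_2$ a unital C$^*$-algebra with faithful state $\phi_2$, and $(A,\phi)=(A_1,\phi_1)*(A_2,\phi_2)$ the reduced free product. Then the family of subalgebras $\bigl(B,\,(u_g^*A_2u_g)_{g\in G}\bigr)$ of $A$ is free with respect to $\phi$.
   Context: Reduced free product: given unital C$^*$-algebras $A_\iota$ with states $\phi_\iota$ whose GNS representations are faithful, $(A,\phi)=*_{\iota}(A_\iota,\phi_\iota)$ is the unital C$^*$-algebra $A$ containing copies of the $A_\iota$, generated by their union, with a state $\phi$ whose GNS representation is faithful on $A$, restricting to $\phi_\iota$ on each $A_\iota$, such that $(A_\iota)_\iota$ is free with respect to $\phi$. A family of unital subalgebras $(S_\iota)_{\iota\in I}$ is free with respect to $\phi$ if $\phi(a_1\cdots a_n)=0$ whenever $n\ge1$, $a_j\in S_{\iota_j}\cap\ker\phi$ and consecutive indices $\iota_j\neq\iota_{j+1}$. Here the subalgebras in the family are indexed by $\{B\}\sqcup G$, so $u_g^*A_2u_g$ and $u_h^*A_2u_h$ for $g\ne h$ count as different members. *)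

theory Defs
  imports Complex_Main "HOL-Algebra.Group"
begin

record 'a cstar_alg =
  cs_carrier :: "'a set"
  cs_add :: "'a \<Rightarrow> 'a \<Rightarrow> 'a"
  cs_mul :: "'a \<Rightarrow> 'a \<Rightarrow> 'a"
  cs_smul :: "complex \<Rightarrow> 'a \<Rightarrow> 'a"
  cs_zero :: 'a
  cs_one :: 'a
  cs_star :: "'a \<Rightarrow> 'a"
  cs_norm :: "'a \<Rightarrow> real"

definition cs_diff :: "'a cstar_alg \<Rightarrow> 'a \<Rightarrow> 'a \<Rightarrow> 'a" where
  "cs_diff A x y = cs_add A x (cs_smul A (-1) y)"

definition unital_cstar_algebra :: "'a cstar_alg \<Rightarrow> bool" where
  "unital_cstar_algebra A \<longleftrightarrow>
     (let C = cs_carrier A; p = cs_add A; m = cs_mul A; s = cs_smul A;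
          z = cs_zero A; e = cs_one A; st = cs_star A; n = cs_norm A in
     z \<in> C \<and> e \<in> C \<and>
     (\<forall>x\<in>C. \<forall>y\<in>C. p x y \<in> C \<and> m x y \<in> C) \<and>
     (\<forall>c. \<forall>x\<in>C. s c x \<in> C) \<and> (\<forall>x\<in>C. st x \<in> C) \<and>
     (\<forall>x\<in>C. \<forall>y\<in>C. \<forall>w\<in>C. p (p x y) w = p x (p y w) \<and> m (m x y) w = m x (m y w) \<and>
        m (p x y) w = p (m x w) (m y w) \<and> m w (p x y) = p (m w x) (m w y)) \<and>
     (\<forall>x\<in>C. \<forall>y\<in>C. p x y = p y x) \<and>
     (\<forall>x\<in>C. p z x = x \<and> p x (s (-1) x) = z \<and> m e x = x \<and> m x e = x \<and> s 1 x = x) \<and>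
     (\<forall>a b. \<forall>x\<in>C. s (a * b) x = s a (s b x) \<and> s (a + b) x = p (s a x) (s b x)) \<and>
     (\<forall>a. \<forall>x\<in>C. \<forall>y\<in>C. s a (p x y) = p (s a x) (s a y) \<and>
        m (s a x) y = s a (m x y) \<and> m x (s a y) = s a (m x y)) \<and>
     (\<forall>x\<in>C. st (st x) = x) \<and>
     (\<forall>x\<in>C. \<forall>y\<in>C. st (p x y) = p (st x) (st y) \<and> st (m x y) = m (st y) (st x)) \<and>
     (\<forall>a. \<forall>x\<in>C. st (s a x) = s (cnj a) (st x)) \<and>
     (\<forall>x\<in>C. 0 \<le> n x \<and> (n x = 0 \<longleftrightarrow> x = z)) \<and>
     (\<forall>x\<in>C. \<forall>y\<in>C. n (p x y) \<le> n x + n y \<and> n (m x y) \<le> n x * n y) \<and>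
     (\<forall>a. \<forall>x\<in>C. n (s a x) = cmod a * n x) \<and>
     (\<forall>x\<in>C. n (m (st x) x) = (n x)\<^sup>2) \<and>
     \<comment> \<open>completeness\<close>
     (\<forall>X. (\<forall>k. X k \<in> C) \<and>
          (\<forall>\<epsilon>>0. \<exists>N. \<forall>i\<ge>N. \<forall>j\<ge>N. n (cs_diff A (X i) (X j)) < \<epsilon>) \<longrightarrow>
          (\<exists>x\<in>C. (\<lambda>k. n (cs_diff A (X k) x)) \<longlonglongrightarrow> 0)))"

definition cs_norm_closed :: "'a cstar_alg \<Rightarrow> 'a set \<Rightarrow> bool" where
  "cs_norm_closed A S \<longleftrightarrow>
     (\<forall>X x. (\<forall>k. X k \<in> S) \<and> x \<in> cs_carrier A \<and>
        (\<lambda>k. cs_norm A (cs_diff A (X k) x)) \<longlonglongrightarrow> 0 \<longrightarrow> x \<in> S)"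

definition unital_cstar_subalgebra :: "'a cstar_alg \<Rightarrow> 'a set \<Rightarrow> bool" where
  "unital_cstar_subalgebra A S \<longleftrightarrow>
     S \<subseteq> cs_carrier A \<and> cs_one A \<in> S \<and>
     (\<forall>x\<in>S. \<forall>y\<in>S. cs_add A x y \<in> S \<and> cs_mul A x y \<in> S) \<and>
     (\<forall>c. \<forall>x\<in>S. cs_smul A c x \<in> S) \<and> (\<forall>x\<in>S. cs_star A x \<in> S) \<and>
     cs_norm_closed A S"

definition cstar_generated :: "'a cstar_alg \<Rightarrow> 'a set \<Rightarrow> 'a set" where
  "cstar_generated A T = \<Inter>{S. unital_cstar_subalgebra A S \<and> T \<subseteq> S}"

definition is_state :: "'a cstar_alg \<Rightarrow> ('a \<Rightarrow> complex) \<Rightarrow> bool" where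
  "is_state A \<phi> \<longleftrightarrow>
     (\<forall>x\<in>cs_carrier A. \<forall>y\<in>cs_carrier A. \<phi> (cs_add A x y) = \<phi> x + \<phi> y) \<and>
     (\<forall>c. \<forall>x\<in>cs_carrier A. \<phi> (cs_smul A c x) = c * \<phi> x) \<and>
     (\<forall>x\<in>cs_carrier A. Im (\<phi> (cs_mul A (cs_star A x) x)) = 0 \<and>
                          0 \<le> Re (\<phi> (cs_mul A (cs_star A x) x))) \<and>
     \<phi> (cs_one A) = 1"

definition faithful_on :: "'a cstar_alg \<Rightarrow> ('a \<Rightarrow> complex) \<Rightarrow> 'a set \<Rightarrow> bool" where
  "faithful_on A \<phi> S \<longleftrightarrow>
     (\<forall>a\<in>S. \<phi> (cs_mul A (cs_star A a) a) = 0 \<longrightarrow> a = cs_zero A)"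

text \<open>The GNS representation of the restriction of the state to S is faithful on S:
  pi(a) = 0 iff the vector [a x] has norm zero for all x in S, i.e. phi(x* a* a x) = 0.\<close>
definition gns_faithful_on :: "'a cstar_alg \<Rightarrow> ('a \<Rightarrow> complex) \<Rightarrow> 'a set \<Rightarrow> bool" where
  "gns_faithful_on A \<phi> S \<longleftrightarrow>
     (\<forall>a\<in>S. (\<forall>x\<in>S. \<phi> (cs_mul A (cs_star A (cs_mul A a x)) (cs_mul A a x)) = 0)
        \<longrightarrow> a = cs_zero A)"

definition cs_unitary :: "'a cstar_alg \<Rightarrow> 'a \<Rightarrow> bool" where
  "cs_unitary A u \<longleftrightarrow> u \<in> cs_carrier A \<and>
     cs_mul A (cs_star A u) u = cs_one A \<and> cs_mul A u (cs_star A u) = cs_one A"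

definition star_aut_on :: "'a cstar_alg \<Rightarrow> 'a set \<Rightarrow> ('a \<Rightarrow> 'a) \<Rightarrow> bool" where
  "star_aut_on A B f \<longleftrightarrow> bij_betw f B B \<and> f (cs_one A) = cs_one A \<and>
     (\<forall>x\<in>B. \<forall>y\<in>B. f (cs_add A x y) = cs_add A (f x) (f y) \<and>
                   f (cs_mul A x y) = cs_mul A (f x) (f y)) \<and>
     (\<forall>c. \<forall>x\<in>B. f (cs_smul A c x) = cs_smul A c (f x)) \<and>
     (\<forall>x\<in>B. f (cs_star A x) = cs_star A (f x))"

definition cs_prod :: "'a cstar_alg \<Rightarrow> 'a list \<Rightarrow> 'a" where
  "cs_prod A as = foldr (cs_mul A) as (cs_one A)"

definition free_family :: "'a cstar_alg \<Rightarrow> ('a \<Rightarrow> complex) \<Rightarrow> 'i set \<Rightarrow> ('i \<Rightarrow> 'a set) \<Rightarrow> bool" where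
  "free_family A \<phi> I S \<longleftrightarrow>
     (\<forall>is as. length as = length is \<and> 1 \<le> length as \<and> set is \<subseteq> I \<and>
        (\<forall>j<length as. as ! j \<in> S (is ! j) \<and> \<phi> (as ! j) = 0) \<and>
        (\<forall>j. Suc j < length is \<longrightarrow> is ! j \<noteq> is ! Suc j)
        \<longrightarrow> \<phi> (cs_prod A as) = 0)"

text \<open>Reduced free product (A, phi) = (A1, phi|A1) * (A2, phi|A2), with A1, A2 identified
  with their copies inside A, as characterised in the paper.\<close>
definition reduced_free_product ::
  "'a cstar_alg \<Rightarrow> ('a \<Rightarrow> complex) \<Rightarrow> 'a set \<Rightarrow> 'a set \<Rightarrow> bool" where
  "reduced_free_product A \<phi> A1 A2 \<longleftrightarrow>
     unital_cstar_algebra A \<and> is_state A \<phi> \<and>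
     unital_cstar_subalgebra A A1 \<and> unital_cstar_subalgebra A A2 \<and>
     gns_faithful_on A \<phi> A1 \<and> gns_faithful_on A \<phi> A2 \<and>
     cstar_generated A (A1 \<union> A2) = cs_carrier A \<and>
     gns_faithful_on A \<phi> (cs_carrier A) \<and>
     free_family A \<phi> {1::nat, 2} (\<lambda>i. if i = 1 then A1 else A2)"

end

theory Submission
  imports Defs
begin

(* A centered element of u_g^* A2 u_g is u_g^* a u_g with a centered in A2, because conjugation by
   the centered unitary u_g preserves phi on A2 (freeness of A1 and A2). Expand an alternating
   product of centered letters in this way: between two consecutive A2-letters, coming from
   u_h^* A2 u_h and u_g^* A2 u_g, stands u_h b u_g^* = alpha_h(b) u_(h g^-1) with b a centered
   letter of B, or u_h u_g^* with h <> g if no B-letter intervenes. Either way this is a centered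
   element of A1, since phi vanishes on B u_k for k <> e and is alpha-invariant on B. The outer
   factors from A1 are centered or equal to 1, so the product is an alternating product of centered
   elements of A1 and A2, and freeness of A1 and A2 makes phi vanish on it. *)

definition centered_word ::
    "('a \<Rightarrow> complex) \<Rightarrow> 'i set \<Rightarrow> ('i \<Rightarrow> 'a set) \<Rightarrow> ('i \<times> 'a) list \<Rightarrow> bool" where
  "centered_word \<phi> I S w \<longleftrightarrow>
     (\<forall>(i, x) \<in> set w. i \<in> I \<and> x \<in> S i \<and> \<phi> x = 0) \<and> distinct_adj (map fst w)"

lemma centered_word_Nil [simp]: "centered_word \<phi> I S []"
  by (simp add: centered_word_def)

lemma centered_word_Cons:
  "centered_word \<phi> I S ((i, x) # w) \<longleftrightarrow>
     i \<in> I \<and> x \<in> S i \<and> \<phi> x = 0 \<and> centered_word \<phi> I S w \<and> (w = [] \<or> fst (hd w) \<noteq> i)"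
  by (cases w) (auto simp: centered_word_def)

lemma free_family_iff_centered_words:
  "free_family A \<phi> I S \<longleftrightarrow>
     (\<forall>w. w \<noteq> [] \<longrightarrow> centered_word \<phi> I S w \<longrightarrow> \<phi> (cs_prod A (map snd w)) = 0)"
proof
  assume free: "free_family A \<phi> I S"
  show "\<forall>w. w \<noteq> [] \<longrightarrow> centered_word \<phi> I S w \<longrightarrow> \<phi> (cs_prod A (map snd w)) = 0"
  proof (intro allI impI)
    fix w assume "w \<noteq> []" and w: "centered_word \<phi> I S w"
    have "\<forall>j<length w. snd (w ! j) \<in> S (fst (w ! j)) \<and> \<phi> (snd (w ! j)) = 0"
      using w nth_mem unfolding centered_word_def by fastforce
    moreover have "set (map fst w) \<subseteq> I"
      using w unfolding centered_word_def by auto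
    ultimately show "\<phi> (cs_prod A (map snd w)) = 0"
      using free \<open>w \<noteq> []\<close> w
      unfolding free_family_def centered_word_def distinct_adj_conv_nth
      by (auto dest!: spec[of _ "map fst w"] spec[of _ "map snd w"] simp: Suc_le_eq)
  qed
next
  assume words: "\<forall>w. w \<noteq> [] \<longrightarrow> centered_word \<phi> I S w \<longrightarrow> \<phi> (cs_prod A (map snd w)) = 0"
  show "free_family A \<phi> I S"
    unfolding free_family_def
  proof (intro allI impI)
    fix "is" as
    assume H: "length as = length is \<and> 1 \<le> length as \<and> set is \<subseteq> I \<and>
        (\<forall>j<length as. as ! j \<in> S (is ! j) \<and> \<phi> (as ! j) = 0) \<and>
        (\<forall>j. Suc j < length is \<longrightarrow> is ! j \<noteq> is ! Suc j)"
    then have "centered_word \<phi> I S (zip is as)"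
      by (auto simp: centered_word_def distinct_adj_conv_nth set_zip)
    with H show "\<phi> (cs_prod A as) = 0"
      using words[rule_format, of "zip is as"] by (force simp: Suc_le_eq)
  qed
qed

lemma cs_prod_Nil [simp]: "cs_prod A [] = cs_one A"
  and cs_prod_Cons [simp]: "cs_prod A (x # xs) = cs_mul A x (cs_prod A xs)"
  by (simp_all add: cs_prod_def)

lemma unital_cstar_subalgebraD:
  assumes "unital_cstar_subalgebra A S"
  shows "S \<subseteq> cs_carrier A" and "cs_one A \<in> S"
    and "\<And>x y. x \<in> S \<Longrightarrow> y \<in> S \<Longrightarrow> cs_mul A x y \<in> S"
    and "\<And>x y. x \<in> S \<Longrightarrow> y \<in> S \<Longrightarrow> cs_add A x y \<in> S"
    and "\<And>c x. x \<in> S \<Longrightarrow> cs_smul A c x \<in> S"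
    and "\<And>x. x \<in> S \<Longrightarrow> cs_star A x \<in> S"
  using assms unfolding unital_cstar_subalgebra_def by blast+

locale cstar_state =
  fixes A :: "'a cstar_alg" and \<phi> :: "'a \<Rightarrow> complex"
  assumes cstar: "unital_cstar_algebra A" and state: "is_state A \<phi>"
begin

abbreviation mult (infixl "\<cdot>" 70) where "x \<cdot> y \<equiv> cs_mul A x y"
abbreviation adjoint ("_\<^sup>\<dagger>" [1000] 1000) where "x\<^sup>\<dagger> \<equiv> cs_star A x"
abbreviation unit ("\<^bold>1") where "\<^bold>1 \<equiv> cs_one A"
abbreviation carrier_A ("\<A>") where "\<A> \<equiv> cs_carrier A"

lemma cs_one_closed: "\<^bold>1 \<in> \<A>"
  and cs_mult_closed: "x \<in> \<A> \<Longrightarrow> y \<in> \<A> \<Longrightarrow> x \<cdot> y \<in> \<A>"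
  and cs_smul_closed: "x \<in> \<A> \<Longrightarrow> cs_smul A c x \<in> \<A>"
  and cs_star_closed: "x \<in> \<A> \<Longrightarrow> x\<^sup>\<dagger> \<in> \<A>"
  and cs_mult_assoc: "x \<in> \<A> \<Longrightarrow> y \<in> \<A> \<Longrightarrow> z \<in> \<A> \<Longrightarrow> x \<cdot> y \<cdot> z = x \<cdot> (y \<cdot> z)"
  and cs_mult_one_left: "x \<in> \<A> \<Longrightarrow> \<^bold>1 \<cdot> x = x"
  and cs_mult_one_right: "x \<in> \<A> \<Longrightarrow> x \<cdot> \<^bold>1 = x"
  and cs_mult_add_left: "x \<in> \<A> \<Longrightarrow> y \<in> \<A> \<Longrightarrow> z \<in> \<A> \<Longrightarrow>
         cs_add A x y \<cdot> z = cs_add A (x \<cdot> z) (y \<cdot> z)"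
  and cs_mult_add_right: "x \<in> \<A> \<Longrightarrow> y \<in> \<A> \<Longrightarrow> z \<in> \<A> \<Longrightarrow>
         z \<cdot> cs_add A x y = cs_add A (z \<cdot> x) (z \<cdot> y)"
  and cs_mult_smul_left: "x \<in> \<A> \<Longrightarrow> y \<in> \<A> \<Longrightarrow> cs_smul A c x \<cdot> y = cs_smul A c (x \<cdot> y)"
  and cs_mult_smul_right: "x \<in> \<A> \<Longrightarrow> y \<in> \<A> \<Longrightarrow> x \<cdot> cs_smul A c y = cs_smul A c (x \<cdot> y)"
  using cstar unfolding unital_cstar_algebra_def Let_def by auto

lemma phi_add: "x \<in> \<A> \<Longrightarrow> y \<in> \<A> \<Longrightarrow> \<phi> (cs_add A x y) = \<phi> x + \<phi> y"
  and phi_smul: "x \<in> \<A> \<Longrightarrow> \<phi> (cs_smul A c x) = c * \<phi> x"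
  and phi_one: "\<phi> \<^bold>1 = 1"
  using state unfolding is_state_def by auto

lemma cs_prod_closed: "set xs \<subseteq> \<A> \<Longrightarrow> cs_prod A xs \<in> \<A>"
  by (induction xs) (auto simp: cs_one_closed cs_mult_closed)

end

locale free_pair = cstar_state +
  fixes A1 A2 :: "'a set"
  assumes A1: "unital_cstar_subalgebra A A1" and A2: "unital_cstar_subalgebra A A2"
    and free: "free_family A \<phi> {1::nat, 2} (\<lambda>i. if i = 1 then A1 else A2)"
begin

abbreviation A12 :: "nat \<Rightarrow> 'a set" where "A12 \<equiv> \<lambda>i. if i = 1 then A1 else A2"

lemma phi_centered_word_zero:
  "w \<noteq> [] \<Longrightarrow> centered_word \<phi> {1, 2} A12 w \<Longrightarrow> \<phi> (cs_prod A (map snd w)) = 0"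
  using free by (simp add: free_family_iff_centered_words)

lemma centered_word_closed:
  "centered_word \<phi> {1, 2} A12 w \<Longrightarrow> cs_prod A (map snd w) \<in> \<A>"
  using unital_cstar_subalgebraD(1)[OF A1] unital_cstar_subalgebraD(1)[OF A2]
  by (intro cs_prod_closed) (fastforce simp: centered_word_def split: if_splits)

lemma phi_A1_times_word_zero:
  assumes d: "d \<in> A1" and w: "centered_word \<phi> {1, 2} A12 w" and "w = [] \<or> fst (hd w) = 2"
    and "\<phi> d = 0 \<or> d = \<^bold>1 \<and> w \<noteq> []"
  shows "\<phi> (d \<cdot> cs_prod A (map snd w)) = 0"
  using assms(4)
proof
  assume "\<phi> d = 0"
  with assms have "centered_word \<phi> {1, 2} A12 ((1, d) # w)"
    by (auto simp: centered_word_Cons)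
  then show ?thesis
    using phi_centered_word_zero by fastforce
next
  assume "d = \<^bold>1 \<and> w \<noteq> []"
  then show ?thesis
    using phi_centered_word_zero centered_word_closed w cs_mult_one_left by simp
qed

text \<open>Apply freeness to the word \<open>v\<^sup>\<dagger>, a - \<phi> a, v\<close>.\<close>
lemma phi_unitary_conj:
  assumes v: "cs_unitary A v" "v \<in> A1" "\<phi> v = 0" "\<phi> (v\<^sup>\<dagger>) = 0" and a: "a \<in> A2"
  shows "\<phi> (v\<^sup>\<dagger> \<cdot> (a \<cdot> v)) = \<phi> a"
proof -
  define a0 where "a0 = cs_add A a (cs_smul A (- \<phi> a) \<^bold>1)"
  have aA: "a \<in> \<A>" and vA: "v \<in> \<A>" and v'A: "v\<^sup>\<dagger> \<in> \<A>" and v'A1: "v\<^sup>\<dagger> \<in> A1"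
    using a v unital_cstar_subalgebraD[OF A1] unital_cstar_subalgebraD[OF A2] by auto
  have unitary: "v\<^sup>\<dagger> \<cdot> v = \<^bold>1"
    using v unfolding cs_unitary_def by blast
  have a0: "a0 \<in> A2" "\<phi> a0 = 0"
    using a aA unital_cstar_subalgebraD[OF A2]
    by (auto simp: a0_def phi_add phi_smul phi_one cs_one_closed cs_smul_closed)
  have "centered_word \<phi> {1, 2} A12 [(1, v\<^sup>\<dagger>), (2, a0), (1, v)]"
    using v v'A1 a0 by (simp add: centered_word_Cons)
  then have "\<phi> (v\<^sup>\<dagger> \<cdot> (a0 \<cdot> v)) = 0"
    using phi_centered_word_zero[of "[(1, v\<^sup>\<dagger>), (2, a0), (1, v)]"] vA cs_mult_one_right by simp
  moreover have "v\<^sup>\<dagger> \<cdot> (a0 \<cdot> v) = cs_add A (v\<^sup>\<dagger> \<cdot> (a \<cdot> v)) (cs_smul A (- \<phi> a) \<^bold>1)"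
    using aA vA v'A unitary
    by (simp add: a0_def cs_mult_add_left cs_mult_add_right cs_mult_smul_left cs_mult_smul_right
        cs_mult_one_left cs_mult_closed cs_smul_closed cs_one_closed)
  ultimately show ?thesis
    using aA vA v'A by (simp add: phi_add phi_smul phi_one cs_mult_closed cs_smul_closed cs_one_closed)
qed

end

locale crossed_product_free_product = free_pair A \<phi> A1 A2 + group G
  for A :: "'a cstar_alg" and \<phi> and A1 A2 and G :: "'g monoid" (structure) +
  fixes B :: "'a set" and \<alpha> :: "'g \<Rightarrow> 'a \<Rightarrow> 'a" and u :: "'g \<Rightarrow> 'a"
  assumes B: "unital_cstar_subalgebra A B" and B_A1: "B \<subseteq> A1"
    and \<alpha>_closed: "\<And>g b. g \<in> carrier G \<Longrightarrow> b \<in> B \<Longrightarrow> \<alpha> g b \<in> B"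
    and u_unitary: "\<And>g. g \<in> carrier G \<Longrightarrow> cs_unitary A (u g)"
    and u_A1: "\<And>g. g \<in> carrier G \<Longrightarrow> u g \<in> A1"
    and u_one: "u \<one> = \<^bold>1"
    and u_mult: "\<And>g h. g \<in> carrier G \<Longrightarrow> h \<in> carrier G \<Longrightarrow> u (g \<otimes> h) = u g \<cdot> u h"
    and u_conj: "\<And>g b. g \<in> carrier G \<Longrightarrow> b \<in> B \<Longrightarrow> u g \<cdot> (b \<cdot> (u g)\<^sup>\<dagger>) = \<alpha> g b"
    and phi_\<alpha>: "\<And>g b. g \<in> carrier G \<Longrightarrow> b \<in> B \<Longrightarrow> \<phi> (\<alpha> g b) = \<phi> b"
    and phi_B_u: "\<And>g b. g \<in> carrier G \<Longrightarrow> g \<noteq> \<one> \<Longrightarrow> b \<in> B \<Longrightarrow> \<phi> (b \<cdot> u g) = 0"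
begin

lemma B_closed: "B \<subseteq> \<A>"
  using B_A1 unital_cstar_subalgebraD(1)[OF A1] by blast

lemma u_closed: "g \<in> carrier G \<Longrightarrow> u g \<in> \<A>"
  using u_unitary unfolding cs_unitary_def by blast

lemma u_adjoint: assumes g: "g \<in> carrier G" shows "(u g)\<^sup>\<dagger> = u (inv g)"
proof -
  have "u g \<cdot> u (inv g) = \<^bold>1"
    using g u_mult[of g "inv g"] u_one by simp
  then have "(u g)\<^sup>\<dagger> = (u g)\<^sup>\<dagger> \<cdot> (u g \<cdot> u (inv g))"
    using g u_closed cs_star_closed cs_mult_one_right by simp
  also have "\<dots> = u (inv g)"
    using g u_closed cs_star_closed u_unitary cs_mult_assoc[symmetric] cs_mult_one_left
    by (simp add: cs_unitary_def)
  finally show ?thesis .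
qed

lemma u_mult_B: assumes g: "g \<in> carrier G" and b: "b \<in> B" shows "u g \<cdot> b = \<alpha> g b \<cdot> u g"
proof -
  have "\<alpha> g b \<cdot> u g = u g \<cdot> (b \<cdot> (u g)\<^sup>\<dagger>) \<cdot> u g"
    using u_conj g b by simp
  also have "\<dots> = u g \<cdot> (b \<cdot> ((u g)\<^sup>\<dagger> \<cdot> u g))"
    using g b B_closed u_closed by (simp add: subsetD cs_star_closed cs_mult_assoc cs_mult_closed)
  also have "\<dots> = u g \<cdot> b"
    using g b B_closed u_unitary cs_mult_one_right by (auto simp: cs_unitary_def)
  finally show ?thesis ..
qed

lemma phi_B_u_zero:
  assumes "b \<in> B" "k \<in> carrier G" "\<phi> b = 0 \<or> k \<noteq> \<one>"
  shows "\<phi> (b \<cdot> u k) = 0"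
  using assms phi_B_u B_closed u_one cs_mult_one_right by (cases "k = \<one>") auto

lemma phi_u_zero: "h \<in> carrier G \<Longrightarrow> h \<noteq> \<one> \<Longrightarrow> \<phi> (u h) = 0"
  using phi_B_u_zero[of "\<^bold>1" h] unital_cstar_subalgebraD(2)[OF B] u_closed cs_mult_one_left
  by simp

lemma phi_conj_A2:
  assumes g: "g \<in> carrier G" and a: "a \<in> A2"
  shows "\<phi> ((u g)\<^sup>\<dagger> \<cdot> (a \<cdot> u g)) = \<phi> a"
proof (cases "g = \<one>")
  case True
  then show ?thesis
    using a unital_cstar_subalgebraD(1)[OF A2] u_one u_adjoint[of \<one>] cs_mult_one_left
      cs_mult_one_right
    by auto
next
  case False
  then have "\<phi> (u g) = 0" "\<phi> ((u g)\<^sup>\<dagger>) = 0"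
    using g phi_u_zero u_adjoint by auto
  then show ?thesis
    using phi_unitary_conj[OF u_unitary[OF g] u_A1[OF g] _ _ a] by simp
qed

abbreviation letters :: "'g option set" where
  "letters \<equiv> insert None (Some ` carrier G)"

abbreviation conjugated_family :: "'g option \<Rightarrow> 'a set" where
  "conjugated_family \<equiv>
     \<lambda>i. case i of None \<Rightarrow> B | Some g \<Rightarrow> {(u g)\<^sup>\<dagger> \<cdot> (a \<cdot> u g) | a. a \<in> A2}"

lemma centered_conjugate:
  assumes "h \<in> carrier G" "x \<in> conjugated_family (Some h)" "\<phi> x = 0"
  obtains a where "a \<in> A2" "\<phi> a = 0" "x = (u h)\<^sup>\<dagger> \<cdot> (a \<cdot> u h)"
  using assms phi_conj_A2 by auto

definition reduced_form :: "('g option \<times> 'a) list \<Rightarrow> 'a \<Rightarrow> 'g \<Rightarrow> (nat \<times> 'a) list \<Rightarrow> bool" where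
  "reduced_form w c k L \<longleftrightarrow>
     c \<in> B \<and> k \<in> carrier G \<and> centered_word \<phi> {1, 2} A12 L \<and> (L = [] \<or> fst (hd L) = 2) \<and>
     (case fst (hd w) of None \<Rightarrow> \<phi> c = 0 | Some h \<Rightarrow> c = \<^bold>1 \<and> h = inv k \<and> L \<noteq> []) \<and>
     cs_prod A (map snd w) = c \<cdot> (u k \<cdot> cs_prod A (map snd L))"

lemma reduced_form_singleton:
  assumes "centered_word \<phi> letters conjugated_family [(i, x)]"
  shows "\<exists>c k L. reduced_form [(i, x)] c k L"
proof (cases i)
  case None
  with assms have "reduced_form [(i, x)] x \<one> []"
    using B_closed u_one cs_one_closed cs_mult_one_right
    by (auto simp: reduced_form_def centered_word_Cons)
  then show ?thesis by blast
next
  case (Some h)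
  with assms have h: "h \<in> carrier G" and "x \<in> conjugated_family (Some h)" "\<phi> x = 0"
    by (auto simp: centered_word_Cons)
  then obtain a where a: "a \<in> A2" "\<phi> a = 0" and x: "x = (u h)\<^sup>\<dagger> \<cdot> (a \<cdot> u h)"
    by (rule centered_conjugate)
  have aA: "a \<in> \<A>"
    using a unital_cstar_subalgebraD(1)[OF A2] by blast
  define L where "L = (2::nat, a) # (if h = \<one> then [] else [(1, u h)])"
  have "reduced_form [(i, x)] \<^bold>1 (inv h) L"
    using Some h a aA x u_A1 phi_u_zero u_one u_adjoint u_closed unital_cstar_subalgebraD(2)[OF B]
    by (auto simp: reduced_form_def L_def centered_word_Cons cs_mult_one_left cs_mult_one_right
        cs_mult_closed)
  then show ?thesis by blast
qed

lemma reduced_form_Cons_B: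
  assumes red: "reduced_form w c k L" and "fst (hd w) = Some h" and b: "b \<in> B" "\<phi> b = 0"
  shows "reduced_form ((None, b) # w) b k L"
proof -
  have "c = \<^bold>1" "cs_prod A (map snd w) = \<^bold>1 \<cdot> (u k \<cdot> cs_prod A (map snd L))"
    and k: "k \<in> carrier G" and L: "centered_word \<phi> {1, 2} A12 L"
    using red assms(2) by (auto simp: reduced_form_def)
  then have "cs_prod A (map snd w) = u k \<cdot> cs_prod A (map snd L)"
    using u_closed centered_word_closed cs_mult_closed cs_mult_one_left by simp
  with red b show ?thesis
    by (auto simp: reduced_form_def)
qed

lemma reduced_form_Cons_A2:
  assumes red: "reduced_form w c k L" and hd_w: "fst (hd w) \<noteq> Some h"
    and h: "h \<in> carrier G" and a: "a \<in> A2" "\<phi> a = 0"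
  shows "reduced_form ((Some h, (u h)\<^sup>\<dagger> \<cdot> (a \<cdot> u h)) # w)
           \<^bold>1 (inv h) ((2, a) # (1, \<alpha> h c \<cdot> u (h \<otimes> k)) # L)"
proof -
  define d where "d = \<alpha> h c \<cdot> u (h \<otimes> k)"
  define P where "P = cs_prod A (map snd L)"
  have c: "c \<in> B" and k: "k \<in> carrier G" and L: "centered_word \<phi> {1, 2} A12 L"
    and L2: "L = [] \<or> fst (hd L) = 2" and w: "cs_prod A (map snd w) = c \<cdot> (u k \<cdot> P)"
    using red by (auto simp: reduced_form_def P_def)
  have hk: "h \<otimes> k \<in> carrier G"
    using h k by simp
  have "\<phi> (\<alpha> h c) = 0 \<or> h \<otimes> k \<noteq> \<one>"
  proof (cases "fst (hd w)")
    case None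
    then show ?thesis
      using red h c phi_\<alpha> by (simp add: reduced_form_def)
  next
    case (Some g)
    then have "g = inv k"
      using red by (auto simp: reduced_form_def)
    with hd_w Some h k show ?thesis
      using inv_equality by auto
  qed
  then have d_centered: "\<phi> d = 0"
    using h c hk \<alpha>_closed phi_B_u_zero by (simp add: d_def)
  have d_A1: "d \<in> A1"
    using h c hk B_A1 \<alpha>_closed u_A1 unital_cstar_subalgebraD(3)[OF A1]
    unfolding d_def by blast
  have closed: "P \<in> \<A>" "c \<in> \<A>" "\<alpha> h c \<in> \<A>" "a \<in> \<A>"
    using L c h \<alpha>_closed a B_closed unital_cstar_subalgebraD(1)[OF A2] centered_word_closed
    by (auto simp: P_def)
  have "u h \<cdot> (c \<cdot> (u k \<cdot> P)) = u h \<cdot> c \<cdot> (u k \<cdot> P)"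
    using closed h k u_closed by (simp add: cs_mult_assoc cs_mult_closed)
  also have "\<dots> = \<alpha> h c \<cdot> (u h \<cdot> u k \<cdot> P)"
    using closed h k c u_closed u_mult_B by (simp add: cs_mult_assoc cs_mult_closed)
  also have "\<dots> = d \<cdot> P"
    using h k u_mult closed u_closed by (simp add: d_def cs_mult_assoc cs_mult_closed)
  finally have "(u h)\<^sup>\<dagger> \<cdot> (a \<cdot> u h) \<cdot> (c \<cdot> (u k \<cdot> P)) = \<^bold>1 \<cdot> (u (inv h) \<cdot> (a \<cdot> (d \<cdot> P)))"
    using closed h k d_A1 unital_cstar_subalgebraD(1)[OF A1] u_closed u_adjoint
    by (simp add: subsetD cs_mult_assoc cs_mult_closed cs_mult_one_left)
  then show ?thesis
    using h a L L2 w d_A1 d_centered unital_cstar_subalgebraD(2)[OF B]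
    by (auto simp: reduced_form_def centered_word_Cons d_def P_def)
qed

lemma reduced_form_exists:
  "w \<noteq> [] \<Longrightarrow> centered_word \<phi> letters conjugated_family w \<Longrightarrow> \<exists>c k L. reduced_form w c k L"
proof (induction w)
  case Nil
  then show ?case by simp
next
  case (Cons y w)
  obtain i x where y: "y = (i, x)"
    by fastforce
  show ?case
  proof (cases "w = []")
    case True
    then show ?thesis
      using Cons.prems y reduced_form_singleton by simp
  next
    case False
    from Cons.prems have i: "i \<in> letters" "x \<in> conjugated_family i" "\<phi> x = 0"
      and w: "centered_word \<phi> letters conjugated_family w" and hd_w: "fst (hd w) \<noteq> i"
      using False by (auto simp: y centered_word_Cons)
    obtain c k L where red: "reduced_form w c k L"
      using Cons.IH False w by blast
    show ?thesis
    proof (cases i)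
      case None
      have "fst (hd w) \<in> letters"
        using w False by (cases w) (auto simp: centered_word_Cons)
      then obtain h where "fst (hd w) = Some h"
        using hd_w None by auto
      then have "reduced_form ((None, x) # w) x k L"
        using reduced_form_Cons_B[OF red] i None by auto
      then show ?thesis
        using None y by blast
    next
      case (Some h)
      then have h: "h \<in> carrier G"
        using i by auto
      obtain a where "a \<in> A2" "\<phi> a = 0" "x = (u h)\<^sup>\<dagger> \<cdot> (a \<cdot> u h)"
        using centered_conjugate[OF h] i Some by auto
      then show ?thesis
        using reduced_form_Cons_A2[OF red _ h] hd_w Some y by blast
    qed
  qed
qed

lemma phi_reduced_form_zero:
  assumes red: "reduced_form w c k L"
  shows "\<phi> (cs_prod A (map snd w)) = 0"
proof -
  have c: "c \<in> B" and k: "k \<in> carrier G" and L: "centered_word \<phi> {1, 2} A12 L"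
    and L2: "L = [] \<or> fst (hd L) = 2"
    and w: "cs_prod A (map snd w) = c \<cdot> (u k \<cdot> cs_prod A (map snd L))"
    using red by (auto simp: reduced_form_def)
  have "\<phi> (c \<cdot> u k) = 0 \<or> c \<cdot> u k = \<^bold>1 \<and> L \<noteq> []"
  proof (cases "\<phi> c = 0 \<or> k \<noteq> \<one>")
    case True
    then show ?thesis
      using phi_B_u_zero c k by blast
  next
    case False
    then have "c = \<^bold>1" "L \<noteq> []"
      using red by (auto simp: reduced_form_def split: option.splits)
    with False show ?thesis
      using u_one cs_one_closed cs_mult_one_left by auto
  qed
  moreover have "c \<cdot> u k \<in> A1"
    using c k B_A1 u_A1 unital_cstar_subalgebraD(3)[OF A1] by blast
  moreover have "cs_prod A (map snd w) = c \<cdot> u k \<cdot> cs_prod A (map snd L)"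
    using w c k B_closed u_closed L centered_word_closed by (simp add: subsetD cs_mult_assoc)
  ultimately show ?thesis
    using phi_A1_times_word_zero L L2 by simp
qed

theorem conjugated_family_free: "free_family A \<phi> letters conjugated_family"
  unfolding free_family_iff_centered_words
  using reduced_form_exists phi_reduced_form_zero by blast

end

theorem mainTheorem2:
  fixes G :: "'g monoid" and A :: "'a cstar_alg" and \<phi> :: "'a \<Rightarrow> complex"
    and B A1 A2 :: "'a set" and \<alpha> :: "'g \<Rightarrow> 'a \<Rightarrow> 'a" and u :: "'g \<Rightarrow> 'a"
  assumes "group G" and "infinite (carrier G)"
    \<comment> \<open>free product and the standing conditions on A1, A2\<close>
    and "reduced_free_product A \<phi> A1 A2"
    and "faithful_on A \<phi> A2"
    \<comment> \<open>B with the action alpha\<close>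
    and "unital_cstar_subalgebra A B" and "B \<subseteq> A1"
    and "\<And>g. g \<in> carrier G \<Longrightarrow> star_aut_on A B (\<alpha> g)"
    and "\<And>b. b \<in> B \<Longrightarrow> \<alpha> \<one>\<^bsub>G\<^esub> b = b"
    and "\<And>g h b. g \<in> carrier G \<Longrightarrow> h \<in> carrier G \<Longrightarrow> b \<in> B \<Longrightarrow>
           \<alpha> (g \<otimes>\<^bsub>G\<^esub> h) b = \<alpha> g (\<alpha> h b)"
    \<comment> \<open>A1 = B \<rtimes>_{alpha,r} G with implementing unitaries u g\<close>
    and "\<And>g. g \<in> carrier G \<Longrightarrow> cs_unitary A (u g) \<and> u g \<in> A1"
    and "u \<one>\<^bsub>G\<^esub> = cs_one A"
    and "\<And>g h. g \<in> carrier G \<Longrightarrow> h \<in> carrier G \<Longrightarrow>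
           u (g \<otimes>\<^bsub>G\<^esub> h) = cs_mul A (u g) (u h)"
    and "\<And>g b. g \<in> carrier G \<Longrightarrow> b \<in> B \<Longrightarrow>
           cs_mul A (u g) (cs_mul A b (cs_star A (u g))) = \<alpha> g b"
    and "A1 = cstar_generated A (B \<union> u ` carrier G)"
    \<comment> \<open>phi1 = phi on A1: faithful alpha-invariant state on B, vanishing on B u_g, g \<noteq> e\<close>
    and "faithful_on A \<phi> B"
    and "\<And>g b. g \<in> carrier G \<Longrightarrow> b \<in> B \<Longrightarrow> \<phi> (\<alpha> g b) = \<phi> b"
    and "\<And>g b. g \<in> carrier G \<Longrightarrow> g \<noteq> \<one>\<^bsub>G\<^esub> \<Longrightarrow> b \<in> B \<Longrightarrow> \<phi> (cs_mul A b (u g)) = 0"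
  shows "free_family A \<phi> (insert None (Some ` carrier G))
           (\<lambda>i. case i of None \<Rightarrow> B
                        | Some g \<Rightarrow> {cs_mul A (cs_star A (u g)) (cs_mul A a (u g)) | a. a \<in> A2})"
proof -
  have free_product: "unital_cstar_algebra A" "is_state A \<phi>" "unital_cstar_subalgebra A A1"
    "unital_cstar_subalgebra A A2" "free_family A \<phi> {1::nat, 2} (\<lambda>i. if i = 1 then A1 else A2)"
    using assms(3) unfolding reduced_free_product_def by blast+
  have "\<And>g b. g \<in> carrier G \<Longrightarrow> b \<in> B \<Longrightarrow> \<alpha> g b \<in> B"
    using assms(7) unfolding star_aut_on_def bij_betw_def by blast
  then interpret crossed_product_free_product A \<phi> A1 A2 G B \<alpha> u
    using assms(1,5,6,10-13,16,17)
    by (intro crossed_product_free_product.intro free_pair.intro cstar_state.intro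
        free_pair_axioms.intro crossed_product_free_product_axioms.intro free_product) simp_all
  show ?thesis
    by (rule conjugated_family_free)
qed

end
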